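(* Let $X$ be a pointed manifold, $f:X\to\mathbb{R}$ a Morse function, $\{m_{x,y}\in C_{|x|-|y|-1}(\Omega X),\ x,y\in\mathrm{Crit}(f)\}$ a twisting cocycle and $(\mathcal{A},\{\nu_n\})$ an $\mathcal{A}_\infty$-module over $C_*(\Omega X)$. Then $\partial=\sum_{n\ge0}(\nu_{n+1}\otimes1)\tilde{\mathbf m}^n$ is a differential (of degree $-1$, with $\partial^2=0$) on $C_*(X,m_{x,y},\mathcal{A})=\mathcal{A}\otimes\mathbb{Z}\mathrm{Crit}(f)$.
   Context: $C_*(\Omega X)$: normalized cubical chains on Moore loops based at the basepoint, an $\mathcal{A}_\infty$-algebra with $\mu_1$ = differential, $\mu_2$ = Pontryagin product, $\mu_i=0$ for $i\ge3$. Koszul sign rule: $(f\otimes g)(x\otimes y)=(-1)^{|g||x|}f(x)\otimes g(y)$. A twisting cocycle satisfies $\partial m_{x,y}=\sum_z(-1)^{|x|-|z|}m_{x,z}m_{z,y}$. An $\mathcal{A}_\infty$-module over $C_*(\Omega X)$ is a graded $\mathbb{Z}$-module $\mathcal{A}$ with maps $\nu_n:\mathcal{A}\otimes C_*(\Omega X)^{\otimes n-1}\to\mathcal{A}$ of degree $n-2$ ($\nu_1$ a differential) satisfying, for all $N\ge1$, $\sum_{s+t=N,s\ge1}(-1)^{st}\nu_{t+1}(\nu_s\otimes1^{\otimes t})+\sum_{r+s+t=N,r,s\ge1}(-1)^{r+st}\nu_{r+t+1}(1^{\otimes r}\otimes\mu_s\otimes1^{\otimes t})=0$. With $\mathbf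 m(x)=\sum_y m_{x,y}\otimes y$, $\tilde{\mathbf m}$ is the degree $-1$ endomorphism of $\mathcal{A}\otimes TC_*(\Omega X)\otimes\mathbb{Z}\mathrm{Crit}(f)$ (where $TC_*(\Omega X)=\bigoplus_{i\ge0}C_*(\Omega X)^{\otimes i}$) given by $\tilde{\mathbf m}(\alpha\otimes\gamma_1\otimes\cdots\otimes\gamma_k\otimes x)=(1^{\otimes k+1}\otimes\mathbf m)(\alpha\otimes\gamma_1\otimes\cdots\otimes\gamma_k\otimes x)$. *)

theory Defs
  imports Main
begin

definition sgn1 :: "int \<Rightarrow> int" where
  "sgn1 k = (if even k then 1 else -1)"

definition zmult :: "int \<Rightarrow> 'a::ab_group_add \<Rightarrow> 'a" where
  "zmult c v = (if 0 \<le> c then (\<Sum>i<nat c. v) else - (\<Sum>i<nat (- c). v))"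

text \<open>A graded Z-module: the ambient abelian group is the internal direct sum
  of the subgroups G k, k in Z (G k = homogeneous elements of degree k).\<close>
definition graded_group :: "(int \<Rightarrow> 'a::ab_group_add set) \<Rightarrow> bool" where
  "graded_group G \<longleftrightarrow>
     (\<forall>k. 0 \<in> G k \<and> (\<forall>a\<in>G k. \<forall>b\<in>G k. a + b \<in> G k \<and> - a \<in> G k)) \<and>
     (\<forall>v. \<exists>S f. finite S \<and> (\<forall>k\<in>S. f k \<in> G k) \<and> v = sum f S) \<and>
     (\<forall>S f. finite S \<longrightarrow> (\<forall>k\<in>S. f k \<in> G k) \<longrightarrow> sum f S = 0 \<longrightarrow> (\<forall>k\<in>S. f k = 0))"

definition homog_list :: "(int \<Rightarrow> 'a set) \<Rightarrow> 'a list \<Rightarrow> int list \<Rightarrow> bool" where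
  "homog_list G xs qs \<longleftrightarrow> length qs = length xs \<and> (\<forall>i<length xs. xs ! i \<in> G (qs ! i))"

fun mu :: "('c::ring \<Rightarrow> 'c) \<Rightarrow> 'c list \<Rightarrow> 'c" where
  "mu d [a] = d a"
| "mu d [a, b] = a * b"
| "mu d _ = 0"

text \<open>Left-hand side of the N-th A-infinity algebra relation
  sum_{r+s+t=N, s>=1} (-1)^{r+st} mu_{r+t+1}(1^r (x) mu_s (x) 1^t),
  evaluated (with the Koszul rule) on a homogeneous elementary tensor
  g_1 (x) ... (x) g_N of degrees q_1..q_N. mu_s has degree s-2.\<close>
definition ainf_alg_rel :: "('c::ring \<Rightarrow> 'c) \<Rightarrow> 'c list \<Rightarrow> int list \<Rightarrow> 'c" where
  "ainf_alg_rel d gs qs =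
     (let N = length gs in
      \<Sum>r\<in>{0..N}. \<Sum>s\<in>{1..N - r}.
        zmult (sgn1 (int r + int s * int (N - r - s)) *
               sgn1 ((int s - 2) * sum_list (take r qs)))
              (mu d (take r gs @ [mu d (take s (drop r gs))] @ drop (r + s) gs)))"

text \<open>(C, mu_1 = d, mu_2 = product, mu_i = 0 for i>=3) is an A-infinity algebra
  (graded by GC, concentrated in non-negative degrees, as chains are).\<close>
definition ainf_algebra :: "(int \<Rightarrow> 'c::ring set) \<Rightarrow> ('c \<Rightarrow> 'c) \<Rightarrow> bool" where
  "ainf_algebra GC d \<longleftrightarrow>
     graded_group GC \<and>
     (\<forall>k<0. GC k = {0}) \<and>
     (\<forall>a b. d (a + b) = d a + d b) \<and>
     (\<forall>k. \<forall>a\<in>GC k. d a \<in> GC (k - 1)) \<and>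
     (\<forall>i j. \<forall>a\<in>GC i. \<forall>b\<in>GC j. a * b \<in> GC (i + j)) \<and>
     (\<forall>gs qs. gs \<noteq> [] \<longrightarrow> homog_list GC gs qs \<longrightarrow> ainf_alg_rel d gs qs = 0)"

text \<open>nu n : A (x) C^{(x) n-1} \<rightarrow> A is represented by the multilinear map
  nu n alpha [g_1,...,g_{n-1}].  Left-hand side of the N-th module relation
  evaluated on the homogeneous elementary tensor alpha (x) g_1 (x) ... (x) g_{N-1}
  (alpha of degree p, g_i of degree q_i), using the Koszul sign rule.\<close>
definition ainf_mod_rel ::
  "('c::ring \<Rightarrow> 'c) \<Rightarrow> (nat \<Rightarrow> 'a::ab_group_add \<Rightarrow> 'c list \<Rightarrow> 'a) \<Rightarrow> nat \<Rightarrow> int \<Rightarrow> 'a \<Rightarrow> 'c list \<Rightarrow> int list \<Rightarrow> 'a" where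
  "ainf_mod_rel d \<nu> N p \<alpha> gs qs =
     (\<Sum>s\<in>{1..N}. zmult (sgn1 (int s * int (N - s)))
                      (\<nu> (N - s + 1) (\<nu> s \<alpha> (take (s - 1) gs)) (drop (s - 1) gs)))
   + (\<Sum>r\<in>{1..N}. \<Sum>s\<in>{1..N - r}.
        zmult (sgn1 (int r + int s * int (N - r - s)) *
               sgn1 ((int s - 2) * (p + sum_list (take (r - 1) qs))))
              (\<nu> (N - s + 1) \<alpha>
                 (take (r - 1) gs @ [mu d (take s (drop (r - 1) gs))] @ drop (r - 1 + s) gs)))"

definition ainf_module ::
  "(int \<Rightarrow> 'c::ring set) \<Rightarrow> ('c \<Rightarrow> 'c) \<Rightarrow> (int \<Rightarrow> 'a::ab_group_add set) \<Rightarrow> (nat \<Rightarrow> 'a \<Rightarrow> 'c list \<Rightarrow> 'a) \<Rightarrow> bool" where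
  "ainf_module GC d GA \<nu> \<longleftrightarrow>
     graded_group GA \<and>
     (\<forall>n \<alpha> \<beta> gs. \<nu> n (\<alpha> + \<beta>) gs = \<nu> n \<alpha> gs + \<nu> n \<beta> gs) \<and>
     (\<forall>n \<alpha> us a b vs. \<nu> n \<alpha> (us @ (a + b) # vs) = \<nu> n \<alpha> (us @ a # vs) + \<nu> n \<alpha> (us @ b # vs)) \<and>
     (\<forall>n p \<alpha> gs qs. 1 \<le> n \<longrightarrow> length gs = n - 1 \<longrightarrow> \<alpha> \<in> GA p \<longrightarrow> homog_list GC gs qs \<longrightarrow>
        \<nu> n \<alpha> gs \<in> GA (p + sum_list qs + int n - 2)) \<and>
     (\<forall>N p \<alpha> gs qs. 1 \<le> N \<longrightarrow> length gs = N - 1 \<longrightarrow> \<alpha> \<in> GA p \<longrightarrow> homog_list GC gs qs \<longrightarrow>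
        ainf_mod_rel d \<nu> N p \<alpha> gs qs = 0)"

definition twisting_cocycle ::
  "(int \<Rightarrow> 'c::ring set) \<Rightarrow> ('c \<Rightarrow> 'c) \<Rightarrow> 'x set \<Rightarrow> ('x \<Rightarrow> nat) \<Rightarrow> ('x \<Rightarrow> 'x \<Rightarrow> 'c) \<Rightarrow> bool" where
  "twisting_cocycle GC d Crit ind m \<longleftrightarrow>
     (\<forall>x\<in>Crit. \<forall>y\<in>Crit. m x y \<in> GC (int (ind x) - int (ind y) - 1)) \<and>
     (\<forall>x\<in>Crit. \<forall>y\<in>Crit. d (m x y) =
        (\<Sum>z\<in>Crit. zmult (sgn1 (int (ind x) - int (ind z))) (m x z * m z y)))"

text \<open>Elementary homogeneous tensors c * (alpha (x) g_1 (x) ... (x) g_k (x) x) in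
  A (x) T C (x) Z Crit(f), stored as (c, |alpha|, alpha, [(g_1,|g_1|),...], x).
  One application of m-tilde to such a tensor is the sum over y in Crit of
  the following term (Koszul sign (-1)^{|m| (|alpha| + sum |g_i|)}, |m| = -1).\<close>
definition mt_step ::
  "('x \<Rightarrow> nat) \<Rightarrow> ('x \<Rightarrow> 'x \<Rightarrow> 'c) \<Rightarrow> int \<times> int \<times> 'a \<times> ('c \<times> int) list \<times> 'x \<Rightarrow> 'x
     \<Rightarrow> int \<times> int \<times> 'a \<times> ('c \<times> int) list \<times> 'x" where
  "mt_step ind m e y = (case e of (c, p, \<alpha>, gs, x) \<Rightarrow>
     (c * sgn1 (p + sum_list (map snd gs)), p, \<alpha>,
      gs @ [(m x y, int (ind x) - int (ind y) - 1)], y))"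

definition fsum :: "(nat \<Rightarrow> 'a::comm_monoid_add) \<Rightarrow> 'a" where
  "fsum f = sum f {n. f n \<noteq> 0}"

text \<open>The y-component of partial(alpha (x) x) = sum_{n>=0} (nu_{n+1} (x) 1) m-tilde^n (alpha (x) x),
  for alpha homogeneous of degree p; m-tilde^n (alpha (x) x) is the sum over all
  ys in Crit^n of the iterated step terms.\<close>
definition twisted_diff ::
  "'x set \<Rightarrow> ('x \<Rightarrow> nat) \<Rightarrow> ('x \<Rightarrow> 'x \<Rightarrow> 'c) \<Rightarrow> (nat \<Rightarrow> 'a::ab_group_add \<Rightarrow> 'c list \<Rightarrow> 'a)
     \<Rightarrow> int \<Rightarrow> 'a \<Rightarrow> 'x \<Rightarrow> 'x \<Rightarrow> 'a" where
  "twisted_diff Crit ind m \<nu> p \<alpha> x y =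
     fsum (\<lambda>n. \<Sum>ys\<in>{ys. set ys \<subseteq> Crit \<and> length ys = n}.
        (case foldl (mt_step ind m) (1, p, \<alpha>, [], x) ys of (c, _, a, gs, z) \<Rightarrow>
           if z = y then zmult c (\<nu> (n + 1) a (map fst gs)) else 0))"

end

(*
  Chains on the based loop space live in non-negative degrees, so m x y vanishes unless
  ind y < ind x.  Hence the twisted differential of alpha (x) x is a finite sum, over the
  index-decreasing paths x = x_0, x_1, ..., x_n = y of critical points, of
  +- nu_{n+1}(alpha; m x_0 x_1, ..., m x_{n-1} x_n), the sign being the Koszul sign of the
  n-fold application of m-tilde.

  In the square of the differential, a path to y together with a point at which it is cut
  contributes exactly one nu(nu(...), ...) term of the A-infinity module relation for that
  path, so the square is minus the sum of the nu(..., mu_s(...), ...) terms.  Only mu_1 and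
  mu_2 are non-zero.  By the cocycle equation, d (m u v) is the sum of the +- m u z * m z v,
  and each of these terms is the mu_2 term of the path with z inserted between u and v, with
  the opposite Koszul sign.  So everything cancels.
*)

theory Submission
  imports Defs HOL.Modules
begin

definition signed :: "int \<Rightarrow> 'a::ab_group_add \<Rightarrow> 'a" where
  "signed k v = (if even k then v else - v)"

lemma sgn1_add: "sgn1 (a + b) = sgn1 a * sgn1 b"
  by (auto simp: sgn1_def)

lemma zmult_zero [simp]: "zmult c 0 = 0"
  by (simp add: zmult_def)

lemma zmult_sgn1: "zmult (sgn1 k) v = signed k v"
  by (simp add: zmult_def sgn1_def signed_def)

lemma zmult_sgn1_mult: "zmult (sgn1 a * sgn1 b) v = signed (a + b) v"
  by (simp add: zmult_def sgn1_def signed_def)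

lemma signed_signed: "signed a (signed b v) = signed (a + b) v"
  by (simp add: signed_def)

lemma signed_add: "signed k (v + w) = signed k v + signed k w"
  by (simp add: signed_def)

lemma signed_minus: "signed k (- v) = - signed k v"
  by (simp add: signed_def)

lemma signed_diff: "signed k (v - w) = signed k v - signed k w"
  by (simp add: signed_def)

lemma signed_zero [simp]: "signed k 0 = 0"
  by (simp add: signed_def)

lemma signed_sum: "signed k (sum f S) = (\<Sum>i\<in>S. signed k (f i))"
  by (simp add: signed_def sum_negf)

lemma signed_cong_even: "even (a - b) \<Longrightarrow> signed a v = signed b v"
  by (auto simp: signed_def)

lemma signed_eq_minus_odd: "odd (a - b) \<Longrightarrow> signed a v = - signed b v"
  by (auto simp: signed_def)

lemma (in additive) signed: "f (signed k v) = signed k (f v)"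
  by (simp add: signed_def minus)

lemma graded_group_sum_mem:
  assumes "graded_group G" and "\<forall>i\<in>S. f i \<in> G k"
  shows "sum f S \<in> G k"
  using assms(2) by (induction S rule: infinite_finite_induct) (use assms(1) in \<open>auto simp: graded_group_def\<close>)

lemma graded_group_signed_mem: "graded_group G \<Longrightarrow> v \<in> G k \<Longrightarrow> signed j v \<in> G k"
  by (simp add: graded_group_def signed_def)

lemma homog_list_Cons: "homog_list G (a # as) (q # qs) \<longleftrightarrow> a \<in> G q \<and> homog_list G as qs"
  by (auto simp: homog_list_def nth_Cons split: nat.splits)

lemma sum_Sigma_reindex:
  assumes "inj_on h S" and "h ` S = Sigma A B" and "finite A" and "\<And>a. a \<in> A \<Longrightarrow> finite (B a)"
  shows "(\<Sum>a\<in>A. \<Sum>b\<in>B a. g a b) = (\<Sum>s\<in>S. case h s of (a, b) \<Rightarrow> g a b)"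
proof -
  have "(\<Sum>a\<in>A. \<Sum>b\<in>B a. g a b) = (\<Sum>w\<in>h ` S. case w of (a, b) \<Rightarrow> g a b)"
    using assms(2-4) by (simp add: sum.Sigma)
  also have "\<dots> = (\<Sum>s\<in>S. case h s of (a, b) \<Rightarrow> g a b)"
    using sum.reindex[OF assms(1)] by simp
  finally show ?thesis .
qed

lemma sum_over_splits:
  assumes "finite A"
  shows "(\<Sum>ys\<in>A. \<Sum>k\<le>length ys. g ys k)
       = (\<Sum>(us, vs)\<in>{(us, vs). us @ vs \<in> A}. g (us @ vs) (length us))"
proof -
  let ?h = "\<lambda>(us, vs). (us @ vs, length us)"
  have "?h ` {(us, vs). us @ vs \<in> A} = Sigma A (\<lambda>ys. {..length ys})"
  proof (rule set_eqI, rule iffI)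
    fix w assume "w \<in> Sigma A (\<lambda>ys. {..length ys})"
    then obtain ys k where "w = (ys, k)" "ys \<in> A" "k \<le> length ys" by blast
    then show "w \<in> ?h ` {(us, vs). us @ vs \<in> A}"
      by (auto intro!: image_eqI[where x = "(take k ys, drop k ys)"])
  qed auto
  moreover have "inj_on ?h {(us, vs). us @ vs \<in> A}"
    by (rule inj_onI) auto
  ultimately show ?thesis
    using sum_Sigma_reindex[of ?h _ A _ g] assms by (auto intro: sum.cong)
qed

lemma sum_over_entries:
  assumes "finite A"
  shows "(\<Sum>ys\<in>A. \<Sum>k<length ys. g ys k)
       = (\<Sum>(us, v, vs)\<in>{(us, v, vs). us @ v # vs \<in> A}. g (us @ v # vs) (length us))"
proof -
  let ?h = "\<lambda>(us, v, vs). (us @ v # vs, length us)"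
  have "?h ` {(us, v, vs). us @ v # vs \<in> A} = Sigma A (\<lambda>ys. {..<length ys})"
  proof (rule set_eqI, rule iffI)
    fix w assume "w \<in> Sigma A (\<lambda>ys. {..<length ys})"
    then obtain ys k where "w = (ys, k)" "ys \<in> A" "k < length ys" by blast
    then show "w \<in> ?h ` {(us, v, vs). us @ v # vs \<in> A}"
      by (auto simp: id_take_nth_drop[symmetric]
          intro!: image_eqI[where x = "(take k ys, ys ! k, drop (Suc k) ys)"])
  qed auto
  moreover have "inj_on ?h {(us, v, vs). us @ v # vs \<in> A}"
    by (rule inj_onI) auto
  ultimately show ?thesis
    using sum_Sigma_reindex[of ?h _ A _ g] assms by (auto intro: sum.cong)
qed

lemma sum_over_adjacent_entries:
  assumes "finite A"
  shows "(\<Sum>ys\<in>A. \<Sum>k<length ys - 1. g ys k)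
       = (\<Sum>(us, z, v, vs)\<in>{(us, z, v, vs). us @ z # v # vs \<in> A}. g (us @ z # v # vs) (length us))"
proof -
  let ?h = "\<lambda>(us, z, v, vs). (us @ z # v # vs, length us)"
  have "?h ` {(us, z, v, vs). us @ z # v # vs \<in> A} = Sigma A (\<lambda>ys. {..<length ys - 1})"
  proof (rule set_eqI, rule iffI)
    fix w assume "w \<in> Sigma A (\<lambda>ys. {..<length ys - 1})"
    then obtain ys k where "w = (ys, k)" "ys \<in> A" "Suc k < length ys" by auto
    then show "w \<in> ?h ` {(us, z, v, vs). us @ z # v # vs \<in> A}"
      by (auto simp: Cons_nth_drop_Suc
          intro!: image_eqI[where x = "(take k ys, ys ! k, ys ! Suc k, drop (Suc (Suc k)) ys)"])
  qed auto
  moreover have "inj_on ?h {(us, z, v, vs). us @ z # v # vs \<in> A}"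
    by (rule inj_onI) auto
  ultimately show ?thesis
    using sum_Sigma_reindex[of ?h _ A _ g] assms by (auto intro: sum.cong)
qed

section \<open>Paths of critical points\<close>

(* A path from x is the list ys of critical points visited after x; it ends at last (x # ys). *)
fun labels :: "('x \<Rightarrow> 'x \<Rightarrow> 'c) \<Rightarrow> 'x \<Rightarrow> 'x list \<Rightarrow> 'c list" where
  "labels m x [] = []"
| "labels m x (y # ys) = m x y # labels m y ys"

fun label_degrees :: "('x \<Rightarrow> nat) \<Rightarrow> 'x \<Rightarrow> 'x list \<Rightarrow> int list" where
  "label_degrees ind x [] = []"
| "label_degrees ind x (y # ys) = (int (ind x) - int (ind y) - 1) # label_degrees ind y ys"

(* The sign exponent that mt_step accumulates along a path, starting from degree t. *)
fun koszul_exp :: "('x \<Rightarrow> nat) \<Rightarrow> int \<Rightarrow> 'x \<Rightarrow> 'x list \<Rightarrow> int" where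
  "koszul_exp ind t x [] = 0"
| "koszul_exp ind t x (y # ys) = t + koszul_exp ind (t + int (ind x) - int (ind y) - 1) y ys"

fun descending :: "('x \<Rightarrow> nat) \<Rightarrow> 'x \<Rightarrow> 'x list \<Rightarrow> bool" where
  "descending ind x [] \<longleftrightarrow> True"
| "descending ind x (y # ys) \<longleftrightarrow> ind y < ind x \<and> descending ind y ys"

definition desc_paths :: "'x set \<Rightarrow> ('x \<Rightarrow> nat) \<Rightarrow> 'x \<Rightarrow> 'x \<Rightarrow> 'x list set" where
  "desc_paths C ind x y = {ys. set ys \<subseteq> C \<and> descending ind x ys \<and> last (x # ys) = y}"

lemma length_labels [simp]: "length (labels m x ys) = length ys"
  by (induction ys arbitrary: x) auto

lemma length_label_degrees [simp]: "length (label_degrees ind x ys) = length ys"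
  by (induction ys arbitrary: x) auto

lemma last_Cons_append: "last (x # us @ vs) = last (last (x # us) # vs)"
  by (induction us arbitrary: x) auto

lemma last_Cons_mem: "x \<in> C \<Longrightarrow> set ys \<subseteq> C \<Longrightarrow> last (x # ys) \<in> C"
  by (induction ys arbitrary: x) auto

lemma labels_append: "labels m x (us @ vs) = labels m x us @ labels m (last (x # us)) vs"
  by (induction us arbitrary: x) auto

lemma label_degrees_append:
  "label_degrees ind x (us @ vs) = label_degrees ind x us @ label_degrees ind (last (x # us)) vs"
  by (induction us arbitrary: x) auto

lemma descending_append:
  "descending ind x (us @ vs) \<longleftrightarrow> descending ind x us \<and> descending ind (last (x # us)) vs"
  by (induction us arbitrary: x) auto

lemma sum_label_degrees:
  "sum_list (label_degrees ind x ys) = int (ind x) - int (ind (last (x # ys))) - int (length ys)"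
  by (induction ys arbitrary: x) auto

lemma koszul_exp_shift: "koszul_exp ind t x ys = koszul_exp ind s x ys + int (length ys) * (t - s)"
proof (induction ys arbitrary: x t s)
  case (Cons y ys)
  from Cons.IH[of "t + int (ind x) - int (ind y) - 1" y "s + int (ind x) - int (ind y) - 1"]
  show ?case by (simp add: algebra_simps)
qed simp

lemma koszul_exp_append:
  "koszul_exp ind t x (us @ vs) = koszul_exp ind t x us
     + koszul_exp ind (t + int (ind x) - int (ind (last (x # us))) - int (length us)) (last (x # us)) vs"
  by (induction us arbitrary: x t) (auto simp: algebra_simps)

lemma length_le_if_descending: "descending ind x ys \<Longrightarrow> length ys \<le> ind x"
  by (induction ys arbitrary: x) fastforce+

lemma finite_desc_paths: "finite C \<Longrightarrow> finite (desc_paths C ind x y)"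
  by (rule finite_subset[OF _ finite_lists_length_le[of C "ind x"]])
    (auto simp: desc_paths_def length_le_if_descending)

lemma append_mem_desc_paths_iff:
  assumes "x \<in> C"
  shows "us @ vs \<in> desc_paths C ind x y
     \<longleftrightarrow> us \<in> desc_paths C ind x (last (x # us)) \<and> vs \<in> desc_paths C ind (last (x # us)) y"
  by (auto simp: desc_paths_def descending_append last_Cons_append)

lemma insert_mem_desc_paths_iff:
  "us @ z # v # vs \<in> desc_paths C ind x y
     \<longleftrightarrow> us @ v # vs \<in> desc_paths C ind x y \<and> z \<in> C \<and> ind v < ind z \<and> ind z < ind (last (x # us))"
  by (auto simp: desc_paths_def descending_append last_Cons_append)

lemma sum_desc_paths_concat:
  assumes "x \<in> C" and "finite C"
  shows "(\<Sum>z\<in>C. \<Sum>us\<in>desc_paths C ind x z. \<Sum>vs\<in>desc_paths C ind z y. F z us vs)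
       = (\<Sum>(us, vs)\<in>{(us, vs). us @ vs \<in> desc_paths C ind x y}. F (last (x # us)) us vs)"
proof -
  let ?T = "SIGMA z:C. desc_paths C ind x z \<times> desc_paths C ind z y"
  have inj: "inj_on snd ?T"
    by (rule inj_onI) (auto simp: desc_paths_def)
  have image: "snd ` ?T = {(us, vs). us @ vs \<in> desc_paths C ind x y}"
  proof (rule set_eqI, rule iffI)
    fix w assume "w \<in> {(us, vs). us @ vs \<in> desc_paths C ind x y}"
    then obtain us vs where w: "w = (us, vs)" and "us @ vs \<in> desc_paths C ind x y" by blast
    with assms(1) have "us \<in> desc_paths C ind x (last (x # us))" "vs \<in> desc_paths C ind (last (x # us)) y"
      by (simp_all add: append_mem_desc_paths_iff)
    moreover from this(1) have "last (x # us) \<in> C"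
      by (intro last_Cons_mem[OF assms(1)]) (simp add: desc_paths_def)
    ultimately show "w \<in> snd ` ?T"
      using w by (intro image_eqI[where x = "(last (x # us), us, vs)"]) auto
  next
    fix w assume "w \<in> snd ` ?T"
    then obtain z us vs where w: "w = (us, vs)" and us: "us \<in> desc_paths C ind x z"
      and vs: "vs \<in> desc_paths C ind z y" by auto
    from us have "last (x # us) = z" by (simp add: desc_paths_def)
    with w us vs assms(1) show "w \<in> {(us, vs). us @ vs \<in> desc_paths C ind x y}"
      by (simp add: append_mem_desc_paths_iff)
  qed
  have "(\<Sum>z\<in>C. \<Sum>us\<in>desc_paths C ind x z. \<Sum>vs\<in>desc_paths C ind z y. F z us vs)
      = (\<Sum>(z, us, vs)\<in>?T. F (last (x # us)) us vs)"
    using assms(2) by (simp add: sum.Sigma sum.cartesian_product finite_desc_paths)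
      (auto simp: desc_paths_def intro!: sum.cong)
  also have "\<dots> = (\<Sum>(us, vs)\<in>snd ` ?T. F (last (x # us)) us vs)"
    by (simp add: sum.reindex[OF inj] case_prod_unfold)
  finally show ?thesis
    by (simp only: image)
qed

lemma finite_entry_splits_desc_paths:
  assumes "finite C"
  shows "finite {(us, v, vs). us @ v # vs \<in> desc_paths C ind x y}"
proof (rule finite_subset)
  let ?L = "{ys. set ys \<subseteq> C \<and> length ys \<le> ind x}"
  show "{(us, v, vs). us @ v # vs \<in> desc_paths C ind x y} \<subseteq> ?L \<times> C \<times> ?L"
  proof
    fix w assume "w \<in> {(us, v, vs). us @ v # vs \<in> desc_paths C ind x y}"
    then obtain us v vs where w: "w = (us, v, vs)" and "us @ v # vs \<in> desc_paths C ind x y"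
      by blast
    then have "set (us @ v # vs) \<subseteq> C" "length (us @ v # vs) \<le> ind x"
      unfolding desc_paths_def by (auto dest: length_le_if_descending simp del: length_append)
    with w show "w \<in> ?L \<times> C \<times> ?L"
      by auto
  qed
  show "finite (?L \<times> C \<times> ?L)"
    using assms by (intro finite_cartesian_product finite_lists_length_le)
qed

lemma sum_desc_paths_insert:
  assumes "finite C"
  shows "(\<Sum>(us, v, vs)\<in>{(us, v, vs). us @ v # vs \<in> desc_paths C ind x y}.
            \<Sum>z\<in>{z \<in> C. ind v < ind z \<and> ind z < ind (last (x # us))}. F us z v vs)
       = (\<Sum>(us, z, v, vs)\<in>{(us, z, v, vs). us @ z # v # vs \<in> desc_paths C ind x y}. F us z v vs)"
proof -
  let ?S = "{(us, v, vs). us @ v # vs \<in> desc_paths C ind x y}"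
  let ?Z = "\<lambda>(us, v, vs). {z \<in> C. ind v < ind z \<and> ind z < ind (last (x # us))}"
  let ?T = "{(us, z, v, vs). us @ z # v # vs \<in> desc_paths C ind x y}"
  let ?\<pi> = "\<lambda>(us, z, v, vs). ((us, v, vs), z)"
  have "finite ?S"
    using assms by (rule finite_entry_splits_desc_paths)
  have image: "?\<pi> ` ?T = Sigma ?S ?Z"
  proof (rule set_eqI, rule iffI)
    fix w assume "w \<in> Sigma ?S ?Z"
    then obtain us v vs z where "w = ((us, v, vs), z)" "us @ z # v # vs \<in> desc_paths C ind x y"
      by (auto simp: insert_mem_desc_paths_iff)
    then show "w \<in> ?\<pi> ` ?T"
      by (intro image_eqI[where x = "(us, z, v, vs)"]) auto
  next
    fix w assume "w \<in> ?\<pi> ` ?T"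
    then show "w \<in> Sigma ?S ?Z"
      by (auto simp: insert_mem_desc_paths_iff)
  qed
  have inj: "inj_on ?\<pi> ?T"
    by (rule inj_onI) auto
  let ?G = "\<lambda>(us, v, vs) z. F us z v vs"
  have "(\<Sum>(us, v, vs)\<in>?S. \<Sum>z\<in>?Z (us, v, vs). F us z v vs) = (\<Sum>w\<in>?S. \<Sum>z\<in>?Z w. ?G w z)"
    by (rule sum.cong) auto
  also have "\<dots> = sum (case_prod ?G) (?\<pi> ` ?T)"
    unfolding image using \<open>finite ?S\<close> assms by (intro sum.Sigma) auto
  also have "\<dots> = (\<Sum>(us, z, v, vs)\<in>?T. F us z v vs)"
    by (subst sum.reindex[OF inj]) (simp add: comp_def split_def)
  finally show ?thesis
    by simp
qed

lemma foldl_mt_step: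
  "foldl (mt_step ind m) (c, p, \<alpha>, gs, x) ys =
     (c * sgn1 (koszul_exp ind (p + sum_list (map snd gs)) x ys), p, \<alpha>,
      gs @ zip (labels m x ys) (label_degrees ind x ys), last (x # ys))"
proof (induction ys arbitrary: c gs x)
  case Nil
  then show ?case by (simp add: sgn1_def)
next
  case (Cons y ys)
  then show ?case
    by (simp add: mt_step_def sgn1_add algebra_simps)
qed

lemma koszul_exp_append_parity:
  "even (koszul_exp ind p x (us @ vs) + int (Suc (length us)) * int (length vs)
     - (koszul_exp ind p x us
        + koszul_exp ind (p + int (ind x) - 1 - int (ind (last (x # us)))) (last (x # us)) vs))"
proof -
  define z where "z = last (x # us)"
  have "koszul_exp ind (p + int (ind x) - int (ind z) - int (length us)) z vs
      = koszul_exp ind (p + int (ind x) - 1 - int (ind z)) z vs + int (length vs) * (1 - int (length us))"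
    using koszul_exp_shift[of ind "p + int (ind x) - int (ind z) - int (length us)" z vs
        "p + int (ind x) - 1 - int (ind z)"]
    by (simp add: algebra_simps)
  moreover have "koszul_exp ind p x (us @ vs)
      = koszul_exp ind p x us + koszul_exp ind (p + int (ind x) - int (ind z) - int (length us)) z vs"
    unfolding z_def by (rule koszul_exp_append)
  ultimately have "koszul_exp ind p x (us @ vs) + int (Suc (length us)) * int (length vs)
     - (koszul_exp ind p x us + koszul_exp ind (p + int (ind x) - 1 - int (ind z)) z vs)
     = 2 * int (length vs)"
    by (simp add: algebra_simps)
  then show ?thesis
    by (simp add: z_def)
qed

lemma koszul_exp_insert_parity:
  "odd (koszul_exp ind p x (us @ v # vs) + int (length (us @ v # vs)) - p
        - sum_list (label_degrees ind x us) + int (ind (last (x # us))) - int (ind z)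
        - (koszul_exp ind p x (us @ z # v # vs) + int (length us) + 1))"
proof -
  define u where "u = last (x # us)"
  define t where "t = p + int (ind x) - int (ind u) - int (length us)"
  have "koszul_exp ind (t + int (ind u) - int (ind z) - 1 + int (ind z) - int (ind v) - 1) v vs
      = koszul_exp ind (t + int (ind u) - int (ind v) - 1) v vs - int (length vs)"
    using koszul_exp_shift[of ind "t + int (ind u) - int (ind z) - 1 + int (ind z) - int (ind v) - 1" v vs
        "t + int (ind u) - int (ind v) - 1"]
    by (simp add: algebra_simps)
  moreover have "koszul_exp ind p x (us @ ws) = koszul_exp ind p x us + koszul_exp ind t u ws" for ws
    unfolding u_def t_def by (rule koszul_exp_append)
  moreover have "sum_list (label_degrees ind x us) = int (ind x) - int (ind u) - int (length us)"
    unfolding u_def by (rule sum_label_degrees)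
  ultimately have "koszul_exp ind p x (us @ v # vs) + int (length (us @ v # vs)) - p
        - sum_list (label_degrees ind x us) + int (ind u) - int (ind z)
        - (koszul_exp ind p x (us @ z # v # vs) + int (length us) + 1)
      = 2 * (int (length vs) + int (ind u) - p - int (ind x) + int (length us)) + 1"
    by (simp add: t_def algebra_simps)
  then show ?thesis
    unfolding u_def by presburger
qed

section \<open>The A-infinity module relation\<close>

lemma ainf_module_graded: "ainf_module GC d GA \<nu> \<Longrightarrow> graded_group GA"
  by (simp add: ainf_module_def)

lemma ainf_module_degree:
  "ainf_module GC d GA \<nu> \<Longrightarrow> 1 \<le> n \<Longrightarrow> length gs = n - 1 \<Longrightarrow> \<alpha> \<in> GA p \<Longrightarrow> homog_list GC gs qs
    \<Longrightarrow> \<nu> n \<alpha> gs \<in> GA (p + sum_list qs + int n - 2)"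
  by (simp add: ainf_module_def)

lemma ainf_module_relation:
  "ainf_module GC d GA \<nu> \<Longrightarrow> 1 \<le> N \<Longrightarrow> length gs = N - 1 \<Longrightarrow> \<alpha> \<in> GA p \<Longrightarrow> homog_list GC gs qs
    \<Longrightarrow> ainf_mod_rel d \<nu> N p \<alpha> gs qs = 0"
  by (simp add: ainf_module_def)

lemma ainf_module_additive_first:
  "ainf_module GC d GA \<nu> \<Longrightarrow> additive (\<lambda>a. \<nu> n a gs)"
  by unfold_locales (simp add: ainf_module_def)

lemma ainf_module_additive_entry:
  "ainf_module GC d GA \<nu> \<Longrightarrow> additive (\<lambda>c. \<nu> n \<alpha> (us @ c # vs))"
  by unfold_locales (simp add: ainf_module_def)

lemma ainf_module_zero_entry:
  assumes "ainf_module GC d GA \<nu>" and "0 \<in> set gs"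
  shows "\<nu> n \<alpha> gs = 0"
proof -
  obtain us vs where "gs = us @ 0 # vs"
    using assms(2) by (meson split_list)
  with additive.zero[OF ainf_module_additive_entry[OF assms(1)]] show ?thesis
    by simp
qed

lemma mu_eq_0: "3 \<le> length xs \<Longrightarrow> mu d xs = 0"
  by (induction d xs rule: mu.induct) auto

lemma sum_atLeast1_upto_two:
  fixes f :: "nat \<Rightarrow> 'a::comm_monoid_add"
  assumes "\<And>s. 3 \<le> s \<Longrightarrow> s \<le> M \<Longrightarrow> f s = 0"
  shows "(\<Sum>s\<in>{1..M}. f s) = (if 1 \<le> M then f 1 else 0) + (if 2 \<le> M then f 2 else 0)"
proof -
  have "f s = 0" if "s \<in> {1..M} - {1..M} \<inter> {1, 2}" for s
    using that by (intro assms) auto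
  then have "(\<Sum>s\<in>{1..M}. f s) = (\<Sum>s\<in>{1..M} \<inter> {1, 2}. f s)"
    by (intro sum.mono_neutral_right) auto
  also have "{1..M} \<inter> {1, 2} = (if 1 \<le> M then {1} else {}) \<union> (if 2 \<le> M then {2} else {})"
    by auto
  finally show ?thesis
    by (simp add: add.commute)
qed

lemma sum_atLeast1_if_shift:
  "(\<Sum>r\<in>{1..N}. if r + j \<le> N then g r else 0) = (\<Sum>k<N - j. g (Suc k))"
proof -
  have "{r \<in> {1..N}. r + j \<le> N} = Suc ` {..<N - j}"
  proof (rule set_eqI, rule iffI)
    fix r assume "r \<in> {r \<in> {1..N}. r + j \<le> N}"
    then show "r \<in> Suc ` {..<N - j}"
      by (intro image_eqI[where x = "r - 1"]) auto
  qed auto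
  then show ?thesis
    by (simp add: sum.inter_filter[symmetric] sum.reindex)
qed

lemma ainf_mod_rel_mu_terms:
  assumes "ainf_module GC d GA \<nu>" and "length gs = n"
  shows "(\<Sum>r\<in>{1..Suc n}. \<Sum>s\<in>{1..Suc n - r}.
            zmult (sgn1 (int r + int s * int (Suc n - r - s)) *
                   sgn1 ((int s - 2) * (p + sum_list (take (r - 1) qs))))
              (\<nu> (Suc n - s + 1) \<alpha>
                 (take (r - 1) gs @ [mu d (take s (drop (r - 1) gs))] @ drop (r - 1 + s) gs)))
       = (\<Sum>k<n. signed (int n - p - sum_list (take k qs))
                   (\<nu> (Suc n) \<alpha> (take k gs @ d (gs ! k) # drop (Suc k) gs)))
       + (\<Sum>k<n - 1. signed (int k + 1)
                   (\<nu> n \<alpha> (take k gs @ (gs ! k * gs ! Suc k) # drop (Suc (Suc k)) gs)))"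
    (is "(\<Sum>r\<in>_. \<Sum>s\<in>_. ?T r s) = ?D + ?P")
proof -
  have inner: "(\<Sum>s\<in>{1..Suc n - r}. ?T r s)
      = (if r + 1 \<le> Suc n then ?T r 1 else 0) + (if r + 2 \<le> Suc n then ?T r 2 else 0)"
    if "r \<in> {1..Suc n}" for r
  proof -
    have "?T r s = 0" if "3 \<le> s" "s \<le> Suc n - r" for s
    proof -
      have "mu d (take s (drop (r - 1) gs)) = 0"
        using that \<open>r \<in> {1..Suc n}\<close> assms(2) by (intro mu_eq_0) simp
      then show ?thesis
        by (simp add: ainf_module_zero_entry[OF assms(1)])
    qed
    then show ?thesis
      by (subst sum_atLeast1_upto_two) auto
  qed
  have "(\<Sum>r\<in>{1..Suc n}. \<Sum>s\<in>{1..Suc n - r}. ?T r s)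
      = (\<Sum>r\<in>{1..Suc n}. (if r + 1 \<le> Suc n then ?T r 1 else 0) + (if r + 2 \<le> Suc n then ?T r 2 else 0))"
    by (rule sum.cong[OF refl]) (rule inner)
  also have "\<dots> = (\<Sum>k<n. ?T (Suc k) 1) + (\<Sum>k<n - 1. ?T (Suc k) 2)"
    unfolding sum.distrib sum_atLeast1_if_shift by simp
  also have "(\<Sum>k<n. ?T (Suc k) 1) = ?D"
  proof (rule sum.cong)
    fix k assume "k \<in> {..<n}"
    with assms(2) have "drop k gs = gs ! k # drop (Suc k) gs" and "int (Suc k) + int (n - Suc k) = int n"
      by (simp_all add: Cons_nth_drop_Suc)
    then show "?T (Suc k) 1 = signed (int n - p - sum_list (take k qs))
                 (\<nu> (Suc n) \<alpha> (take k gs @ d (gs ! k) # drop (Suc k) gs))"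
      by (simp add: zmult_sgn1_mult algebra_simps)
  qed simp
  also have "(\<Sum>k<n - 1. ?T (Suc k) 2) = ?P"
  proof (rule sum.cong)
    fix k assume "k \<in> {..<n - 1}"
    with assms(2) have "drop k gs = gs ! k # gs ! Suc k # drop (Suc (Suc k)) gs" and "Suc n - 2 + 1 = n"
      by (simp_all add: Cons_nth_drop_Suc)
    moreover have "even (int (Suc k) + 2 * int (Suc n - Suc k - 2) - (int k + 1))"
      by simp
    ultimately show "?T (Suc k) 2 = signed (int k + 1)
                 (\<nu> n \<alpha> (take k gs @ (gs ! k * gs ! Suc k) # drop (Suc (Suc k)) gs))"
      by (simp add: zmult_sgn1_mult numeral_2_eq_2 signed_cong_even)
  qed simp
  finally show ?thesis .
qed

lemma ainf_mod_rel_eq: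
  assumes "ainf_module GC d GA \<nu>" and "length gs = n"
  shows "ainf_mod_rel d \<nu> (Suc n) p \<alpha> gs qs =
     (\<Sum>k\<le>n. signed (int (Suc k) * int (n - k)) (\<nu> (Suc (n - k)) (\<nu> (Suc k) \<alpha> (take k gs)) (drop k gs)))
   + (\<Sum>k<n. signed (int n - p - sum_list (take k qs))
               (\<nu> (Suc n) \<alpha> (take k gs @ d (gs ! k) # drop (Suc k) gs)))
   + (\<Sum>k<n - 1. signed (int k + 1)
               (\<nu> n \<alpha> (take k gs @ (gs ! k * gs ! Suc k) # drop (Suc (Suc k)) gs)))"
proof -
  have nu_terms: "(\<Sum>s\<in>{1..Suc n}. zmult (sgn1 (int s * int (Suc n - s)))
            (\<nu> (Suc n - s + 1) (\<nu> s \<alpha> (take (s - 1) gs)) (drop (s - 1) gs)))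
      = (\<Sum>k\<le>n. signed (int (Suc k) * int (n - k)) (\<nu> (Suc (n - k)) (\<nu> (Suc k) \<alpha> (take k gs)) (drop k gs)))"
    unfolding One_nat_def sum.atLeast1_atMost_eq lessThan_Suc_atMost by (simp add: zmult_sgn1)
  show ?thesis
    unfolding ainf_mod_rel_def nu_terms ainf_mod_rel_mu_terms[OF assms] by (rule add.assoc[symmetric])
qed

section \<open>The twisted differential\<close>

locale twisted_complex =
  fixes GC :: "int \<Rightarrow> 'c::ring set" and d :: "'c \<Rightarrow> 'c"
    and C :: "'x set" and ind :: "'x \<Rightarrow> nat" and m :: "'x \<Rightarrow> 'x \<Rightarrow> 'c"
    and GA :: "int \<Rightarrow> 'a::ab_group_add set" and \<nu> :: "nat \<Rightarrow> 'a \<Rightarrow> 'c list \<Rightarrow> 'a"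
  assumes module: "ainf_module GC d GA \<nu>"
    and chains_nonneg: "\<And>k. k < 0 \<Longrightarrow> GC k = {0}"
    and cocycle: "twisting_cocycle GC d C ind m"
    and finite_C: "finite C"
begin

lemma m_mem: "x \<in> C \<Longrightarrow> y \<in> C \<Longrightarrow> m x y \<in> GC (int (ind x) - int (ind y) - 1)"
  using cocycle by (simp add: twisting_cocycle_def)

lemma d_m:
  "x \<in> C \<Longrightarrow> y \<in> C \<Longrightarrow> d (m x y) = (\<Sum>z\<in>C. signed (int (ind x) - int (ind z)) (m x z * m z y))"
  using cocycle by (simp add: twisting_cocycle_def zmult_sgn1)

lemma m_eq_0: "x \<in> C \<Longrightarrow> y \<in> C \<Longrightarrow> ind x \<le> ind y \<Longrightarrow> m x y = 0"
  using m_mem[of x y] chains_nonneg[of "int (ind x) - int (ind y) - 1"] by simp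

lemma zero_mem_labels:
  "x \<in> C \<Longrightarrow> set ys \<subseteq> C \<Longrightarrow> \<not> descending ind x ys \<Longrightarrow> 0 \<in> set (labels m x ys)"
  by (induction ys arbitrary: x) (auto simp: m_eq_0)

lemma homog_list_labels:
  "x \<in> C \<Longrightarrow> set ys \<subseteq> C \<Longrightarrow> homog_list GC (labels m x ys) (label_degrees ind x ys)"
  by (induction ys arbitrary: x) (simp add: homog_list_def, simp add: homog_list_Cons m_mem)

definition path_term :: "int \<Rightarrow> 'a \<Rightarrow> 'x \<Rightarrow> 'x list \<Rightarrow> 'a" where
  "path_term p \<alpha> x ys = signed (koszul_exp ind p x ys) (\<nu> (Suc (length ys)) \<alpha> (labels m x ys))"

lemma twisted_diff_eq_path_sum:
  assumes "x \<in> C"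
  shows "twisted_diff C ind m \<nu> p \<alpha> x y = (\<Sum>ys\<in>desc_paths C ind x y. path_term p \<alpha> x ys)"
proof -
  define F where "F n = (\<Sum>ys\<in>{ys \<in> desc_paths C ind x y. length ys = n}. path_term p \<alpha> x ys)" for n
  have summand: "(\<Sum>ys\<in>{ys. set ys \<subseteq> C \<and> length ys = n}.
        (case foldl (mt_step ind m) (1, p, \<alpha>, [], x) ys of (c, _, a, gs, z) \<Rightarrow>
           if z = y then zmult c (\<nu> (n + 1) a (map fst gs)) else 0)) = F n" for n
  proof -
    have "(\<Sum>ys\<in>{ys. set ys \<subseteq> C \<and> length ys = n}.
        (case foldl (mt_step ind m) (1, p, \<alpha>, [], x) ys of (c, _, a, gs, z) \<Rightarrow>
           if z = y then zmult c (\<nu> (n + 1) a (map fst gs)) else 0))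
      = (\<Sum>ys\<in>{ys. set ys \<subseteq> C \<and> length ys = n}.
           if ys \<in> desc_paths C ind x y then path_term p \<alpha> x ys else 0)"
    proof (rule sum.cong[OF refl])
      fix ys assume ys: "ys \<in> {ys. set ys \<subseteq> C \<and> length ys = n}"
      then have "\<nu> (n + 1) \<alpha> (labels m x ys) = 0" if "\<not> descending ind x ys"
        using that assms by (intro ainf_module_zero_entry[OF module] zero_mem_labels) auto
      with ys show "(case foldl (mt_step ind m) (1, p, \<alpha>, [], x) ys of (c, _, a, gs, z) \<Rightarrow>
           if z = y then zmult c (\<nu> (n + 1) a (map fst gs)) else 0)
         = (if ys \<in> desc_paths C ind x y then path_term p \<alpha> x ys else 0)"
        by (auto simp: foldl_mt_step zmult_sgn1 path_term_def desc_paths_def)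
    qed
    also have "\<dots> = F n"
      unfolding F_def using finite_C
      by (simp add: sum.inter_filter[symmetric] finite_lists_length_eq)
        (auto simp: desc_paths_def intro!: sum.cong)
    finally show ?thesis .
  qed
  have "twisted_diff C ind m \<nu> p \<alpha> x y = fsum F"
    unfolding twisted_diff_def summand ..
  also have "\<dots> = sum F {..ind x}"
    unfolding fsum_def
  proof (rule sum.mono_neutral_left)
    show "{n. F n \<noteq> 0} \<subseteq> {..ind x}"
    proof
      fix n assume "n \<in> {n. F n \<noteq> 0}"
      then obtain ys where "ys \<in> desc_paths C ind x y" "length ys = n"
        unfolding F_def by (cases "{ys \<in> desc_paths C ind x y. length ys = n} = {}") auto
      then show "n \<in> {..ind x}"
        by (auto simp: desc_paths_def dest: length_le_if_descending)
    qed
  qed auto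
  also have "\<dots> = (\<Sum>ys\<in>desc_paths C ind x y. path_term p \<alpha> x ys)"
    unfolding F_def using finite_C
    by (intro sum.group finite_desc_paths) (auto simp: desc_paths_def dest: length_le_if_descending)
  finally show ?thesis .
qed

lemma twisted_diff_add:
  assumes "x \<in> C"
  shows "twisted_diff C ind m \<nu> p (\<alpha> + \<beta>) x y
       = twisted_diff C ind m \<nu> p \<alpha> x y + twisted_diff C ind m \<nu> p \<beta> x y"
  by (simp add: twisted_diff_eq_path_sum[OF assms] path_term_def signed_add sum.distrib
      additive.add[OF ainf_module_additive_first[OF module]])

lemma path_term_mem:
  assumes "x \<in> C" and "ys \<in> desc_paths C ind x y" and "\<alpha> \<in> GA p"
  shows "path_term p \<alpha> x ys \<in> GA (p + int (ind x) - 1 - int (ind y))"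
proof -
  have "homog_list GC (labels m x ys) (label_degrees ind x ys)"
    using assms(1,2) by (simp add: homog_list_labels desc_paths_def)
  then have "\<nu> (Suc (length ys)) \<alpha> (labels m x ys)
      \<in> GA (p + sum_list (label_degrees ind x ys) + int (Suc (length ys)) - 2)"
    by (intro ainf_module_degree[OF module _ _ assms(3)]) simp_all
  moreover have "p + sum_list (label_degrees ind x ys) + int (Suc (length ys)) - 2
      = p + int (ind x) - 1 - int (ind y)"
    using assms(2) by (simp add: sum_label_degrees desc_paths_def)
  ultimately have "\<nu> (Suc (length ys)) \<alpha> (labels m x ys) \<in> GA (p + int (ind x) - 1 - int (ind y))"
    by (simp only:)
  then show ?thesis
    unfolding path_term_def by (rule graded_group_signed_mem[OF ainf_module_graded[OF module]])
qed

lemma twisted_diff_mem: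
  assumes "x \<in> C" and "\<alpha> \<in> GA p"
  shows "twisted_diff C ind m \<nu> p \<alpha> x y \<in> GA (p + int (ind x) - 1 - int (ind y))"
  unfolding twisted_diff_eq_path_sum[OF assms(1)]
  using assms by (intro graded_group_sum_mem[OF ainf_module_graded[OF module]]) (simp add: path_term_mem)

lemma twisted_diff_twisted_diff:
  assumes "x \<in> C"
  shows "(\<Sum>z\<in>C. twisted_diff C ind m \<nu> (p + int (ind x) - 1 - int (ind z))
                    (twisted_diff C ind m \<nu> p \<alpha> x z) z y)
       = (\<Sum>ys\<in>desc_paths C ind x y. signed (koszul_exp ind p x ys)
            (\<Sum>k\<le>length ys. signed (int (Suc k) * int (length ys - k))
               (\<nu> (Suc (length ys - k)) (\<nu> (Suc k) \<alpha> (take k (labels m x ys))) (drop k (labels m x ys)))))"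
proof -
  define F where "F z us vs = path_term (p + int (ind x) - 1 - int (ind z)) (path_term p \<alpha> x us) z vs"
    for z us vs
  define G where "G ys k = signed (koszul_exp ind p x ys) (signed (int (Suc k) * int (length ys - k))
      (\<nu> (Suc (length ys - k)) (\<nu> (Suc k) \<alpha> (take k (labels m x ys))) (drop k (labels m x ys))))"
    for ys k
  have split_term: "G (us @ vs) (length us) = F (last (x # us)) us vs" for us vs
  proof -
    have "G (us @ vs) (length us) = signed (koszul_exp ind p x (us @ vs) + int (Suc (length us)) * int (length vs))
        (\<nu> (Suc (length vs)) (\<nu> (Suc (length us)) \<alpha> (labels m x us)) (labels m (last (x # us)) vs))"
      by (simp add: G_def signed_signed labels_append)
    also have "\<dots> = F (last (x # us)) us vs"
      unfolding F_def path_term_def additive.signed[OF ainf_module_additive_first[OF module]] signed_signed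
      by (rule signed_cong_even) (use koszul_exp_append_parity[of ind p x us vs] in \<open>simp add: algebra_simps\<close>)
    finally show ?thesis .
  qed
  have "(\<Sum>z\<in>C. twisted_diff C ind m \<nu> (p + int (ind x) - 1 - int (ind z))
                    (twisted_diff C ind m \<nu> p \<alpha> x z) z y)
      = (\<Sum>z\<in>C. \<Sum>us\<in>desc_paths C ind x z. \<Sum>vs\<in>desc_paths C ind z y. F z us vs)"
  proof (rule sum.cong[OF refl])
    fix z assume "z \<in> C"
    then show "twisted_diff C ind m \<nu> (p + int (ind x) - 1 - int (ind z)) (twisted_diff C ind m \<nu> p \<alpha> x z) z y
        = (\<Sum>us\<in>desc_paths C ind x z. \<Sum>vs\<in>desc_paths C ind z y. F z us vs)"
      unfolding twisted_diff_eq_path_sum[OF assms] twisted_diff_eq_path_sum[OF \<open>z \<in> C\<close>] F_def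
      by (simp add: path_term_def additive.sum[OF ainf_module_additive_first[OF module]] signed_sum
          sum.swap[of _ "desc_paths C ind x z"])
  qed
  also have "\<dots> = (\<Sum>(us, vs)\<in>{(us, vs). us @ vs \<in> desc_paths C ind x y}. F (last (x # us)) us vs)"
    by (rule sum_desc_paths_concat[OF assms finite_C])
  also have "\<dots> = (\<Sum>(us, vs)\<in>{(us, vs). us @ vs \<in> desc_paths C ind x y}. G (us @ vs) (length us))"
    by (simp add: split_term)
  also have "\<dots> = (\<Sum>ys\<in>desc_paths C ind x y. \<Sum>k\<le>length ys. G ys k)"
    by (rule sum_over_splits[symmetric]) (rule finite_desc_paths[OF finite_C])
  also have "\<dots> = (\<Sum>ys\<in>desc_paths C ind x y. signed (koszul_exp ind p x ys)
            (\<Sum>k\<le>length ys. signed (int (Suc k) * int (length ys - k))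
               (\<nu> (Suc (length ys - k)) (\<nu> (Suc k) \<alpha> (take k (labels m x ys))) (drop k (labels m x ys)))))"
    by (simp add: G_def signed_sum)
  finally show ?thesis .
qed


(* This term arises twice: from d (m u v) on the path through u and v, via the cocycle
   equation, and as the mu_2 term of the path through u, z and v. *)
definition inserted_term :: "'a \<Rightarrow> 'x \<Rightarrow> 'x list \<Rightarrow> 'x \<Rightarrow> 'x \<Rightarrow> 'x list \<Rightarrow> 'a" where
  "inserted_term \<alpha> x us z v vs =
     \<nu> (length us + length vs + 2) \<alpha> (labels m x us @ (m (last (x # us)) z * m z v) # labels m v vs)"

lemma inserted_term_eq_0:
  assumes "last (x # us) \<in> C" and "z \<in> C" and "v \<in> C"
    and "\<not> (ind v < ind z \<and> ind z < ind (last (x # us)))"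
  shows "inserted_term \<alpha> x us z v vs = 0"
proof -
  from assms have "m (last (x # us)) z * m z v = 0"
    by (auto simp: m_eq_0 not_less)
  then show ?thesis
    unfolding inserted_term_def by (simp add: ainf_module_zero_entry[OF module])
qed

lemma nu_labels_d_expand:
  assumes "last (x # us) \<in> C" and "v \<in> C"
  shows "\<nu> (length us + length vs + 2) \<alpha> (labels m x us @ d (m (last (x # us)) v) # labels m v vs)
       = (\<Sum>z\<in>C. signed (int (ind (last (x # us))) - int (ind z)) (inserted_term \<alpha> x us z v vs))"
  by (simp add: d_m[OF assms] inserted_term_def additive.sum[OF ainf_module_additive_entry[OF module]]
      additive.signed[OF ainf_module_additive_entry[OF module]] del: last.simps)

lemma sum_inserted_terms_between:
  assumes "x \<in> C" and "us @ v # vs \<in> desc_paths C ind x y"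
  shows "(\<Sum>z\<in>C. signed (e z) (inserted_term \<alpha> x us z v vs))
       = (\<Sum>z\<in>{z \<in> C. ind v < ind z \<and> ind z < ind (last (x # us))}. signed (e z) (inserted_term \<alpha> x us z v vs))"
proof (rule sum.mono_neutral_right[OF finite_C])
  from assms have "last (x # us) \<in> C" "v \<in> C"
    by (auto simp: desc_paths_def intro: last_Cons_mem)
  then show "\<forall>z\<in>C - {z \<in> C. ind v < ind z \<and> ind z < ind (last (x # us))}.
      signed (e z) (inserted_term \<alpha> x us z v vs) = 0"
    by (auto simp: inserted_term_eq_0)
qed auto

lemma path_sum_differential_terms:
  assumes "x \<in> C"
  shows "(\<Sum>ys\<in>desc_paths C ind x y. signed (koszul_exp ind p x ys)
            (\<Sum>k<length ys. signed (int (length ys) - p - sum_list (take k (label_degrees ind x ys)))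
               (\<nu> (Suc (length ys)) \<alpha> (take k (labels m x ys) @ d (labels m x ys ! k) # drop (Suc k) (labels m x ys)))))
       = (\<Sum>(us, z, v, vs)\<in>{(us, z, v, vs). us @ z # v # vs \<in> desc_paths C ind x y}.
            signed (koszul_exp ind p x (us @ v # vs) + int (length (us @ v # vs)) - p
                    - sum_list (label_degrees ind x us) + int (ind (last (x # us))) - int (ind z))
              (inserted_term \<alpha> x us z v vs))"
proof -
  define E where "E us v vs z = koszul_exp ind p x (us @ v # vs) + int (length (us @ v # vs)) - p
      - sum_list (label_degrees ind x us) + int (ind (last (x # us))) - int (ind z)" for us v vs z
  define H where "H ys k = signed (koszul_exp ind p x ys)
      (signed (int (length ys) - p - sum_list (take k (label_degrees ind x ys)))
        (\<nu> (Suc (length ys)) \<alpha> (take k (labels m x ys) @ d (labels m x ys ! k) # drop (Suc k) (labels m x ys))))"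
    for ys k
  have expand: "H (us @ v # vs) (length us) = (\<Sum>z\<in>C. signed (E us v vs z) (inserted_term \<alpha> x us z v vs))"
    if "us @ v # vs \<in> desc_paths C ind x y" for us v vs
  proof -
    from that assms have "last (x # us) \<in> C" "v \<in> C"
      by (auto simp: desc_paths_def intro: last_Cons_mem)
    moreover have "H (us @ v # vs) (length us) = signed (koszul_exp ind p x (us @ v # vs))
        (signed (int (length (us @ v # vs)) - p - sum_list (label_degrees ind x us))
          (\<nu> (length us + length vs + 2) \<alpha> (labels m x us @ d (m (last (x # us)) v) # labels m v vs)))"
      by (simp add: H_def labels_append label_degrees_append nth_append del: last.simps)
    ultimately show ?thesis
      using nu_labels_d_expand[of x us v vs \<alpha>]
      by (simp add: signed_sum signed_signed E_def algebra_simps del: last.simps)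
  qed
  have "(\<Sum>ys\<in>desc_paths C ind x y. signed (koszul_exp ind p x ys)
            (\<Sum>k<length ys. signed (int (length ys) - p - sum_list (take k (label_degrees ind x ys)))
               (\<nu> (Suc (length ys)) \<alpha> (take k (labels m x ys) @ d (labels m x ys ! k) # drop (Suc k) (labels m x ys)))))
      = (\<Sum>ys\<in>desc_paths C ind x y. \<Sum>k<length ys. H ys k)"
    by (simp add: H_def signed_sum)
  also have "\<dots> = (\<Sum>(us, v, vs)\<in>{(us, v, vs). us @ v # vs \<in> desc_paths C ind x y}. H (us @ v # vs) (length us))"
    by (rule sum_over_entries) (rule finite_desc_paths[OF finite_C])
  also have "\<dots> = (\<Sum>(us, v, vs)\<in>{(us, v, vs). us @ v # vs \<in> desc_paths C ind x y}.
      \<Sum>z\<in>{z \<in> C. ind v < ind z \<and> ind z < ind (last (x # us))}. signed (E us v vs z) (inserted_term \<alpha> x us z v vs))"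
  proof (rule sum.cong[OF refl])
    fix w assume "w \<in> {(us, v, vs). us @ v # vs \<in> desc_paths C ind x y}"
    then obtain us v vs where "w = (us, v, vs)" and path: "us @ v # vs \<in> desc_paths C ind x y"
      by blast
    then show "(case w of (us, v, vs) \<Rightarrow> H (us @ v # vs) (length us))
        = (case w of (us, v, vs) \<Rightarrow> \<Sum>z\<in>{z \<in> C. ind v < ind z \<and> ind z < ind (last (x # us))}.
             signed (E us v vs z) (inserted_term \<alpha> x us z v vs))"
      using expand[OF path] sum_inserted_terms_between[OF assms(1) path] by (simp del: last.simps)
  qed
  also have "\<dots> = (\<Sum>(us, z, v, vs)\<in>{(us, z, v, vs). us @ z # v # vs \<in> desc_paths C ind x y}.
      signed (E us v vs z) (inserted_term \<alpha> x us z v vs))"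
    by (rule sum_desc_paths_insert[OF finite_C])
  finally show ?thesis
    by (simp add: E_def)
qed

lemma path_sum_product_terms:
  "(\<Sum>ys\<in>desc_paths C ind x y. signed (koszul_exp ind p x ys)
      (\<Sum>k<length ys - 1. signed (int k + 1)
         (\<nu> (length ys) \<alpha> (take k (labels m x ys) @ (labels m x ys ! k * labels m x ys ! Suc k)
                              # drop (Suc (Suc k)) (labels m x ys)))))
   = (\<Sum>(us, z, v, vs)\<in>{(us, z, v, vs). us @ z # v # vs \<in> desc_paths C ind x y}.
        signed (koszul_exp ind p x (us @ z # v # vs) + int (length us) + 1) (inserted_term \<alpha> x us z v vs))"
proof -
  define G where "G ys k = signed (koszul_exp ind p x ys) (signed (int k + 1)
      (\<nu> (length ys) \<alpha> (take k (labels m x ys) @ (labels m x ys ! k * labels m x ys ! Suc k)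
                           # drop (Suc (Suc k)) (labels m x ys))))" for ys k
  have "G (us @ z # v # vs) (length us)
      = signed (koszul_exp ind p x (us @ z # v # vs) + int (length us) + 1) (inserted_term \<alpha> x us z v vs)"
    for us z v vs
    by (simp add: G_def inserted_term_def labels_append nth_append signed_signed add.assoc del: last.simps)
  then show ?thesis
    using sum_over_adjacent_entries[OF finite_desc_paths[OF finite_C], of G]
    by (simp add: G_def signed_sum)
qed

lemma twisted_diff_square_zero:
  assumes "x \<in> C" and "\<alpha> \<in> GA p"
  shows "(\<Sum>z\<in>C. twisted_diff C ind m \<nu> (p + int (ind x) - 1 - int (ind z))
                    (twisted_diff C ind m \<nu> p \<alpha> x z) z y) = 0"
proof -
  let ?gs = "labels m x" and ?qs = "label_degrees ind x"
  define A where "A ys = (\<Sum>k\<le>length ys. signed (int (Suc k) * int (length ys - k))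
      (\<nu> (Suc (length ys - k)) (\<nu> (Suc k) \<alpha> (take k (?gs ys))) (drop k (?gs ys))))" for ys
  define D where "D ys = (\<Sum>k<length ys. signed (int (length ys) - p - sum_list (take k (?qs ys)))
      (\<nu> (Suc (length ys)) \<alpha> (take k (?gs ys) @ d (?gs ys ! k) # drop (Suc k) (?gs ys))))" for ys
  define P where "P ys = (\<Sum>k<length ys - 1. signed (int k + 1)
      (\<nu> (length ys) \<alpha> (take k (?gs ys) @ (?gs ys ! k * ?gs ys ! Suc k) # drop (Suc (Suc k)) (?gs ys))))" for ys
  define S where "S = {(us, z, v, vs). us @ z # v # vs \<in> desc_paths C ind x y}"
  define E where "E us z v vs = koszul_exp ind p x (us @ v # vs) + int (length (us @ v # vs)) - p
      - sum_list (label_degrees ind x us) + int (ind (last (x # us))) - int (ind z)" for us z v vs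
  have relation: "A ys = - D ys - P ys" if "ys \<in> desc_paths C ind x y" for ys
  proof -
    have "homog_list GC (?gs ys) (?qs ys)"
      using that assms(1) by (simp add: homog_list_labels desc_paths_def)
    then have "ainf_mod_rel d \<nu> (Suc (length ys)) p \<alpha> (?gs ys) (?qs ys) = 0"
      by (intro ainf_module_relation[OF module _ _ assms(2)]) simp_all
    then show ?thesis
      unfolding ainf_mod_rel_eq[OF module length_labels] A_def D_def P_def
      by (simp add: eq_neg_iff_add_eq_0 algebra_simps)
  qed
  have "(\<Sum>z\<in>C. twisted_diff C ind m \<nu> (p + int (ind x) - 1 - int (ind z))
                    (twisted_diff C ind m \<nu> p \<alpha> x z) z y)
      = (\<Sum>ys\<in>desc_paths C ind x y. signed (koszul_exp ind p x ys) (A ys))"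
    unfolding A_def by (rule twisted_diff_twisted_diff[OF assms(1)])
  also have "\<dots> = - (\<Sum>ys\<in>desc_paths C ind x y. signed (koszul_exp ind p x ys) (D ys))
                  - (\<Sum>ys\<in>desc_paths C ind x y. signed (koszul_exp ind p x ys) (P ys))"
    by (simp add: relation signed_diff signed_minus sum_subtractf sum_negf)
  also have "\<dots> = - (\<Sum>(us, z, v, vs)\<in>S. signed (E us z v vs) (inserted_term \<alpha> x us z v vs)
                      + signed (koszul_exp ind p x (us @ z # v # vs) + int (length us) + 1)
                          (inserted_term \<alpha> x us z v vs))"
    unfolding D_def P_def S_def E_def path_sum_differential_terms[OF assms(1)] path_sum_product_terms
    by (simp add: sum.distrib split_def)
  also have "\<dots> = 0"
  proof -
    have "signed (E us z v vs) (inserted_term \<alpha> x us z v vs)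
        + signed (koszul_exp ind p x (us @ z # v # vs) + int (length us) + 1) (inserted_term \<alpha> x us z v vs)
        = 0" for us z v vs
      unfolding E_def signed_eq_minus_odd[OF koszul_exp_insert_parity] by simp
    then show ?thesis
      by (simp only:) simp
  qed
  finally show ?thesis .
qed

end

theorem proposition4p8:
  fixes GC :: "int \<Rightarrow> 'c::ring set" and d :: "'c \<Rightarrow> 'c"
    and Crit :: "'x set" and ind :: "'x \<Rightarrow> nat" and m :: "'x \<Rightarrow> 'x \<Rightarrow> 'c"
    and GA :: "int \<Rightarrow> 'a::ab_group_add set" and \<nu> :: "nat \<Rightarrow> 'a \<Rightarrow> 'c list \<Rightarrow> 'a"
  assumes "ainf_algebra GC d"
    and "finite Crit"
    and "twisting_cocycle GC d Crit ind m"
    and "ainf_module GC d GA \<nu>"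
  shows "(\<forall>p x. \<forall>\<alpha>\<in>GA p. \<forall>\<beta>\<in>GA p. x \<in> Crit \<longrightarrow> (\<forall>y\<in>Crit.
            twisted_diff Crit ind m \<nu> p (\<alpha> + \<beta>) x y
              = twisted_diff Crit ind m \<nu> p \<alpha> x y + twisted_diff Crit ind m \<nu> p \<beta> x y))
       \<and> (\<forall>p x. \<forall>\<alpha>\<in>GA p. x \<in> Crit \<longrightarrow> (\<forall>y\<in>Crit.
            twisted_diff Crit ind m \<nu> p \<alpha> x y \<in> GA (p + int (ind x) - 1 - int (ind y))))
       \<and> (\<forall>p x. \<forall>\<alpha>\<in>GA p. x \<in> Crit \<longrightarrow> (\<forall>y\<in>Crit.
            (\<Sum>z\<in>Crit. twisted_diff Crit ind m \<nu> (p + int (ind x) - 1 - int (ind z))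
                          (twisted_diff Crit ind m \<nu> p \<alpha> x z) z y) = 0))"
proof -
  interpret twisted_complex GC d Crit ind m GA \<nu>
    using assms by unfold_locales (auto simp: ainf_algebra_def)
  show ?thesis
    using twisted_diff_add twisted_diff_mem twisted_diff_square_zero by blast
qed

end
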